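(* Let $f:[0,\infty)\to\mathbb{R}$ be convex with $f(1)=0$ and $G:[0,\mathsf{D_m}(f))\to[0,\infty)$ non-decreasing with $G(0)=0$. Then: (1) for a fixed channel $p_{Y|X}$ between finite alphabets, $I_{G,f}(X;Y)$ is a concave function of the input distribution $p_X$; (2) if $X\to Y\to Z$ is a Markov chain, then $I_{G,f}(X;Y)\ge I_{G,f}(X;Z)$; (3) if $X\to Y\to Z$ is a Markov chain, then $I_{G,f}(X;YZ)=I_{G,f}(X;Y)$ and $I_{G,f}(XY;Z)=I_{G,f}(Y;Z)$.
   Context: All random variables take values in finite sets. $D_f(p\|q)=\sum_y q(y) f(p(y)/q(y))$ with $0f(0/0)=0$; $\mathsf{D_m}(f)=f(0)+\lim_{t\to\infty}f(t)/t$. $I_{G,f}(X;Y)=\min_{q_Y}\sum_x p_X(x)\,G(D_f(p_{Y|X=x}\|q_Y))$, minimum over distributions on the alphabet of $Y$. $X\to Y\to Z$ Markov means $X$ and $Z$ are conditionally independent given $Y$. *)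

theory Defs
  imports "HOL-Analysis.Analysis"
begin

definition is_dist :: "('a::finite \<Rightarrow> real) \<Rightarrow> bool" where
  "is_dist p \<longleftrightarrow> (\<forall>a. 0 \<le> p a) \<and> (\<Sum>a\<in>UNIV. p a) = 1"

text \<open>Slope at infinity  lim_{t\<rightarrow>\<infinity>} f(t)/t  (exists in the extended reals for convex f).\<close>
definition slope_inf :: "(real \<Rightarrow> real) \<Rightarrow> ereal" where
  "slope_inf f = Lim at_top (\<lambda>t. ereal (f t / t))"

definition Dm :: "(real \<Rightarrow> real) \<Rightarrow> ereal" where
  "Dm f = ereal (f 0) + slope_inf f"

definition fdiv :: "(real \<Rightarrow> real) \<Rightarrow> ('b::finite \<Rightarrow> real) \<Rightarrow> ('b \<Rightarrow> real) \<Rightarrow> ereal" where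
  "fdiv f p q = (\<Sum>y\<in>UNIV.
     (if q y > 0 then ereal (q y * f (p y / q y))
      else if p y = 0 then 0 else ereal (p y) * slope_inf f))"

text \<open>G is given on [0, D_m(f)); at arguments not below D_m(f) it is extended by its
  supremum (left limit, G being non-decreasing with G(0)=0).\<close>
definition Gext :: "(real \<Rightarrow> real) \<Rightarrow> (real \<Rightarrow> real) \<Rightarrow> ereal \<Rightarrow> ereal" where
  "Gext G f d = (if d < Dm f then ereal (G (real_of_ereal d))
      else (SUP t \<in> {0} \<union> {t. 0 \<le> t \<and> ereal t < Dm f}. ereal (G t)))"

text \<open>The conditional for p_A(a) = 0
  is irrelevant since it is weighted by 0 (and 0 * anything = 0 in ereal).\<close>
definition IGf :: "(real \<Rightarrow> real) \<Rightarrow> (real \<Rightarrow> real) \<Rightarrow> ('a::finite \<times> 'b::finite \<Rightarrow> real) \<Rightarrow> ereal" where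
  "IGf G f P = (INF q \<in> {q. is_dist q}.
      \<Sum>a\<in>UNIV. ereal (\<Sum>b\<in>UNIV. P (a, b)) *
         Gext G f (fdiv f (\<lambda>b. P (a, b) / (\<Sum>b'\<in>UNIV. P (a, b'))) q))"

text \<open>X \<rightarrow> Y \<rightarrow> Z Markov for a joint pmf P on X\<times>Y\<times>Z: X and Z conditionally independent given Y.\<close>
definition markov_chain :: "('x::finite \<times> 'y::finite \<times> 'z::finite \<Rightarrow> real) \<Rightarrow> bool" where
  "markov_chain P \<longleftrightarrow> (\<forall>x y z. P (x, y, z) * (\<Sum>x'\<in>UNIV. \<Sum>z'\<in>UNIV. P (x', y, z'))
      = (\<Sum>z'\<in>UNIV. P (x, y, z')) * (\<Sum>x'\<in>UNIV. P (x', y, z)))"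

end

theory Submission
  imports Defs
begin

(* The f-divergence is a sum of values of the perspective (a, b) |-> b f(a/b) of f, closed at
   b = 0 by the slope of f at infinity. The perspective is positively homogeneous and, by
   convexity of f, subadditive; this gives D_f >= 0 and the data processing inequality
   D_f(pK || qK) <= D_f(p || q) for every stochastic kernel K.

   Writing a joint law as p(x) W(y|x), the quantity minimised in I_{G,f} is linear in p, so its
   infimum over q is concave in p. Garbling the output by a kernel K and replacing q by qK can
   only decrease each divergence, and G is monotone, so garbling cannot increase I_{G,f}. Under
   the Markov property Z is a garbling of Y, while Y and (Y, Z) are garblings of each other; and
   in I_{G,f}(XY; Z) the channel depends on Y only, so X can be summed out of the input. *)

lemma mono_on_tendsto_at_top_SUP:
  fixes g :: "real \<Rightarrow> 'a::{complete_linorder, linorder_topology}"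
  assumes g: "mono_on {a..} g"
  shows "(g \<longlongrightarrow> (SUP t\<in>{a..}. g t)) at_top"
proof (rule order_tendstoI)
  fix y assume "y < (SUP t\<in>{a..}. g t)"
  then obtain t0 where "a \<le> t0" "y < g t0" by (auto simp: less_SUP_iff)
  then have "\<forall>t\<ge>t0. y < g t"
    using g by (meson atLeast_iff less_le_trans mono_onD order_trans)
  then show "\<forall>\<^sub>F t in at_top. y < g t" by (auto simp: eventually_at_top_linorder)
next
  fix y assume "(SUP t\<in>{a..}. g t) < y"
  then have "\<forall>t\<ge>a. g t < y" by (meson SUP_upper atLeast_iff le_less_trans)
  then show "\<forall>\<^sub>F t in at_top. g t < y" by (auto simp: eventually_at_top_linorder)
qed

lemma convex_on_slope_mono:
  fixes f :: "real \<Rightarrow> real"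
  assumes "convex_on I f" "x \<in> I" "z \<in> I" "x < y" "y < z"
  shows "(f y - f x) / (y - x) \<le> (f z - f x) / (z - x)"
  using convex_on_slope_le(1)[OF assms] by (metis minus_diff_eq minus_divide_divide)

lemma slope_inf_tendsto:
  assumes cf: "convex_on {0..} f"
  shows "((\<lambda>t. ereal (f t / t)) \<longlongrightarrow> slope_inf f) at_top"
proof -
  define g where "g t = ereal ((f t - f 0) / t)" for t
  have "mono_on {1..} g"
  proof (rule mono_onI)
    fix s t :: real assume "s \<in> {1..}" "t \<in> {1..}" "s \<le> t"
    then show "g s \<le> g t"
      using convex_on_slope_mono[OF cf, of 0 t s] by (cases "s = t") (auto simp: g_def)
  qed
  then have "(g \<longlongrightarrow> (SUP t\<in>{1..}. g t)) at_top" by (rule mono_on_tendsto_at_top_SUP)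
  moreover have "((\<lambda>t. ereal (f 0 / t)) \<longlongrightarrow> ereal 0) at_top"
    by (intro tendsto_intros tendsto_divide_0[OF tendsto_const]
        filterlim_at_top_imp_at_infinity[OF filterlim_ident])
  ultimately have "((\<lambda>t. g t + ereal (f 0 / t)) \<longlongrightarrow> (SUP t\<in>{1..}. g t) + ereal 0) at_top"
    by (intro tendsto_add_ereal_general1) simp_all
  moreover have "\<forall>\<^sub>F t in at_top. g t + ereal (f 0 / t) = ereal (f t / t)"
    using eventually_gt_at_top[of 0] by eventually_elim (simp add: g_def diff_divide_distrib)
  ultimately have "((\<lambda>t. ereal (f t / t)) \<longlongrightarrow> (SUP t\<in>{1..}. g t)) at_top"
    by (simp add: Lim_transform_eventually)
  moreover from this have "slope_inf f = (SUP t\<in>{1..}. g t)"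
    unfolding slope_inf_def by (rule tendsto_Lim[rotated]) simp
  ultimately show ?thesis by simp
qed

lemma chord_slope_le_slope_inf:
  assumes cf: "convex_on {0..} f" and u: "0 \<le> u" and v: "0 < v"
  shows "ereal ((f (u + v) - f u) / v) \<le> slope_inf f"
proof -
  define c where "c = (f (u + v) - f u) / v"
  have below: "\<forall>\<^sub>F T in at_top. ereal (c + (f u - c * u) / T) \<le> ereal (f T / T)"
    using eventually_gt_at_top[of "u + v"]
  proof eventually_elim
    case (elim T)
    have "c \<le> (f T - f u) / (T - u)"
      using convex_on_slope_mono[OF cf, of u T "u + v"] u v elim by (simp add: c_def)
    then have "c * T + (f u - c * u) \<le> f T"
      using elim v by (simp add: le_divide_eq algebra_simps)
    then have "(c * T + (f u - c * u)) / T \<le> f T / T"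
      using elim u v by (simp add: divide_right_mono)
    then show ?case
      using elim u v by (simp add: add_divide_distrib)
  qed
  have "((\<lambda>T. c + (f u - c * u) / T) \<longlongrightarrow> c + 0) at_top"
    by (intro tendsto_intros tendsto_divide_0[OF tendsto_const]
        filterlim_at_top_imp_at_infinity[OF filterlim_ident])
  then have "((\<lambda>T. ereal (c + (f u - c * u) / T)) \<longlongrightarrow> ereal c) at_top"
    by (simp add: tendsto_ereal)
  then show ?thesis
    unfolding c_def[symmetric]
    by (rule tendsto_le[OF trivial_limit_at_top_linorder slope_inf_tendsto[OF cf] _ below])
qed

lemma slope_inf_neq_MInf:
  assumes "convex_on {0..} f"
  shows "slope_inf f \<noteq> -\<infinity>"
  using chord_slope_le_slope_inf[OF assms, of 0 1] by auto

definition persp :: "(real \<Rightarrow> real) \<Rightarrow> real \<Rightarrow> real \<Rightarrow> ereal" where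
  "persp f a b =
     (if b > 0 then ereal (b * f (a / b)) else if a = 0 then 0 else ereal a * slope_inf f)"

lemma fdiv_eq_sum_persp: "fdiv f p q = (\<Sum>y\<in>UNIV. persp f (p y) (q y))"
  by (simp add: fdiv_def persp_def)

lemma persp_zero_right: "persp f a 0 = ereal a * slope_inf f"
  by (simp add: persp_def zero_ereal_def[symmetric])

lemma persp_scale:
  assumes "0 \<le> c" "0 \<le> a" "0 \<le> b"
  shows "persp f (c * a) (c * b) = ereal c * persp f a b"
  using assms by (cases "c = 0"; cases "b = 0")
    (simp_all add: persp_def persp_zero_right zero_ereal_def[symmetric] mult.assoc[symmetric])

lemma convex_on_perspective_add_le:
  assumes cf: "convex_on {0..} f"
    and "0 \<le> a1" "0 \<le> a2" "0 < b1" "0 < b2"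
  shows "(b1 + b2) * f ((a1 + a2) / (b1 + b2)) \<le> b1 * f (a1 / b1) + b2 * f (a2 / b2)"
proof -
  define t where "t = b2 / (b1 + b2)"
  have t: "0 \<le> t" "t \<le> 1" "1 - t = b1 / (b1 + b2)"
    using assms by (auto simp: t_def field_simps)
  have "(1 - t) * (a1 / b1) = a1 / (b1 + b2)" "t * (a2 / b2) = a2 / (b1 + b2)"
    unfolding t(3) using assms by (simp_all add: t_def)
  then have "(1 - t) *\<^sub>R (a1 / b1) + t *\<^sub>R (a2 / b2) = (a1 + a2) / (b1 + b2)"
    by (simp add: add_divide_distrib)
  then have "f ((a1 + a2) / (b1 + b2)) \<le> (1 - t) * f (a1 / b1) + t * f (a2 / b2)"
    using convex_onD[OF cf t(1,2), of "a1 / b1" "a2 / b2"] assms by simp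
  then have "(b1 + b2) * f ((a1 + a2) / (b1 + b2))
      \<le> (b1 + b2) * ((1 - t) * f (a1 / b1) + t * f (a2 / b2))"
    using assms by (simp add: mult_left_mono)
  also have "\<dots> = b1 * f (a1 / b1) + b2 * f (a2 / b2)"
    unfolding t(3) using assms by (simp add: t_def distrib_left)
  finally show ?thesis .
qed

lemma persp_add_le_persp_zero:
  assumes cf: "convex_on {0..} f" and b: "0 < b" and a: "0 \<le> a" and a': "0 \<le> a'"
  shows "persp f (a + a') b \<le> persp f a b + persp f a' 0"
proof (cases "a' = 0")
  case True
  then show ?thesis by (simp add: persp_zero_right zero_ereal_def[symmetric])
next
  case False
  with a' have "0 < a' / b" using b by simp
  then have chord: "ereal ((f (a / b + a' / b) - f (a / b)) / (a' / b)) \<le> slope_inf f"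
    using a b by (intro chord_slope_le_slope_inf[OF cf]) simp_all
  show ?thesis
  proof (cases "slope_inf f")
    case (real s)
    with chord have "(f (a / b + a' / b) - f (a / b)) / (a' / b) \<le> s"
      by (metis ereal_less_eq(3))
    with \<open>0 < a' / b\<close> have "f (a / b + a' / b) - f (a / b) \<le> s * (a' / b)"
      by (simp only: pos_divide_le_eq)
    then have "b * (f (a / b + a' / b) - f (a / b)) \<le> b * (s * (a' / b))"
      using b by (intro mult_left_mono) auto
    then have "b * f ((a + a') / b) \<le> b * f (a / b) + a' * s"
      using b by (simp add: algebra_simps add_divide_distrib)
    then show ?thesis using real b by (simp add: persp_def persp_zero_right)
  next
    case PInf
    then show ?thesis using False a' b by (simp add: persp_def persp_zero_right)
  next
    case MInf
    then show ?thesis using slope_inf_neq_MInf[OF cf] by simp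
  qed
qed

lemma persp_add_le:
  assumes cf: "convex_on {0..} f"
    and a1: "0 \<le> a1" and a2: "0 \<le> a2" and b1: "0 \<le> b1" and b2: "0 \<le> b2"
  shows "persp f (a1 + a2) (b1 + b2) \<le> persp f a1 b1 + persp f a2 b2"
proof -
  consider "0 < b1" "0 < b2" | "0 < b1" "b2 = 0" | "b1 = 0" "0 < b2" | "b1 = 0" "b2 = 0"
    using b1 b2 by fastforce
  then show ?thesis
  proof cases
    case 1
    then show ?thesis
      using convex_on_perspective_add_le[OF cf a1 a2] by (simp add: persp_def)
  next
    case 2
    then show ?thesis
      using persp_add_le_persp_zero[OF cf _ a1 a2] by simp
  next
    case 3
    then show ?thesis
      using persp_add_le_persp_zero[OF cf _ a2 a1] by (simp add: add.commute)
  next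
    case 4
    then show ?thesis
      using ereal_left_distrib[of "ereal a1" "ereal a2" "slope_inf f"] a1 a2
      by (simp add: persp_zero_right)
  qed
qed

lemma persp_sum_le:
  assumes cf: "convex_on {0..} f"
    and a: "\<And>i. i \<in> I \<Longrightarrow> 0 \<le> a i" and b: "\<And>i. i \<in> I \<Longrightarrow> 0 \<le> b i"
  shows "persp f (\<Sum>i\<in>I. a i) (\<Sum>i\<in>I. b i) \<le> (\<Sum>i\<in>I. persp f (a i) (b i))"
  using a b
proof (induction I rule: infinite_finite_induct)
  case (insert i I)
  have "persp f (a i + sum a I) (b i + sum b I) \<le> persp f (a i) (b i) + persp f (sum a I) (sum b I)"
    using insert.prems by (intro persp_add_le[OF cf]) (auto intro: sum_nonneg)
  also have "\<dots> \<le> persp f (a i) (b i) + (\<Sum>i\<in>I. persp f (a i) (b i))"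
    using insert by (intro add_left_mono) auto
  finally show ?case using insert.hyps by simp
qed (simp_all add: persp_zero_right zero_ereal_def[symmetric])

lemma sum_ereal_mult_const:
  assumes "\<And>i. i \<in> A \<Longrightarrow> 0 \<le> k i"
  shows "(\<Sum>i\<in>A. ereal (k i) * x) = ereal (sum k A) * x"
  using sum_ereal_left_distrib[of A "\<lambda>i. ereal (k i)" x] assms by simp

lemma is_dist_compose:
  assumes p: "is_dist p" and K: "\<And>a. is_dist (K a)"
  shows "is_dist (\<lambda>b. \<Sum>a\<in>UNIV. p a * K a b)"
proof -
  have "(\<Sum>b\<in>UNIV. \<Sum>a\<in>UNIV. p a * K a b) = (\<Sum>a\<in>UNIV. p a * (\<Sum>b\<in>UNIV. K a b))"
    by (subst sum.swap) (simp add: sum_distrib_left)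
  then show ?thesis
    using assms by (auto simp: is_dist_def intro!: sum_nonneg)
qed

lemma fdiv_data_processing:
  fixes p q :: "'a::finite \<Rightarrow> real" and K :: "'a \<Rightarrow> 'b::finite \<Rightarrow> real"
  assumes cf: "convex_on {0..} f"
    and p: "\<And>a. 0 \<le> p a" and q: "\<And>a. 0 \<le> q a" and K: "\<And>a. is_dist (K a)"
  shows "fdiv f (\<lambda>b. \<Sum>a\<in>UNIV. p a * K a b) (\<lambda>b. \<Sum>a\<in>UNIV. q a * K a b) \<le> fdiv f p q"
proof -
  have K0: "0 \<le> K a b" and K1: "(\<Sum>b\<in>UNIV. K a b) = 1" for a b
    using K by (auto simp: is_dist_def)
  have "fdiv f (\<lambda>b. \<Sum>a\<in>UNIV. p a * K a b) (\<lambda>b. \<Sum>a\<in>UNIV. q a * K a b)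
      \<le> (\<Sum>b\<in>UNIV. \<Sum>a\<in>UNIV. persp f (p a * K a b) (q a * K a b))"
    unfolding fdiv_eq_sum_persp
    by (intro sum_mono persp_sum_le[OF cf]) (auto intro: mult_nonneg_nonneg p q K0)
  also have "\<dots> = (\<Sum>b\<in>UNIV. \<Sum>a\<in>UNIV. ereal (K a b) * persp f (p a) (q a))"
    using persp_scale[OF K0 p q] by (simp add: mult.commute)
  also have "\<dots> = (\<Sum>a\<in>UNIV. \<Sum>b\<in>UNIV. ereal (K a b) * persp f (p a) (q a))"
    by (rule sum.swap)
  also have "\<dots> = fdiv f p q"
    unfolding fdiv_eq_sum_persp by (simp add: sum_ereal_mult_const K0 K1)
  finally show ?thesis .
qed

lemma fdiv_nonneg:
  assumes cf: "convex_on {0..} f" and f1: "f 1 = 0" and p: "is_dist p" and q: "is_dist q"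
  shows "0 \<le> fdiv f p q"
proof -
  have "persp f (\<Sum>y\<in>UNIV. p y) (\<Sum>y\<in>UNIV. q y) \<le> fdiv f p q"
    unfolding fdiv_eq_sum_persp using p q by (intro persp_sum_le[OF cf]) (auto simp: is_dist_def)
  then show ?thesis
    using p q f1 by (simp add: is_dist_def persp_def zero_ereal_def[symmetric])
qed

lemma Gext_mono:
  assumes G_mono: "\<And>a b. 0 \<le> a \<Longrightarrow> a \<le> b \<Longrightarrow> ereal b < Dm f \<Longrightarrow> G a \<le> G b"
    and d1: "0 \<le> d1" and d12: "d1 \<le> d2"
  shows "Gext G f d1 \<le> Gext G f d2"
proof (cases "d1 < Dm f")
  case d1_below: True
  with d1 obtain r1 where r1: "d1 = ereal r1" by (cases d1) auto
  show ?thesis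
  proof (cases "d2 < Dm f")
    case True
    with d1 d12 obtain r2 where "d2 = ereal r2" by (cases d2) auto
    with True d1_below r1 d1 d12 show ?thesis by (auto simp: Gext_def intro: G_mono)
  next
    case False
    have "ereal (G r1) \<le> (SUP t \<in> {0} \<union> {t. 0 \<le> t \<and> ereal t < Dm f}. ereal (G t))"
      by (rule SUP_upper) (use r1 d1_below d1 in auto)
    with d1_below False r1 show ?thesis by (simp add: Gext_def)
  qed
next
  case False
  with d12 have "\<not> d2 < Dm f" by simp
  with False show ?thesis by (simp add: Gext_def)
qed

(* Rows with zero marginal are irrelevant (they are weighted by 0); the uniform choice keeps
   every row a distribution. *)
definition cond_kernel :: "('a::finite \<times> 'b::finite \<Rightarrow> real) \<Rightarrow> 'a \<Rightarrow> 'b \<Rightarrow> real" where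
  "cond_kernel P a b =
     (if 0 < (\<Sum>b'\<in>UNIV. P (a, b')) then P (a, b) / (\<Sum>b'\<in>UNIV. P (a, b'))
      else 1 / real CARD('b))"

lemma is_dist_cond_kernel:
  assumes P: "\<And>w. 0 \<le> P w"
  shows "is_dist (cond_kernel P a)"
proof (cases "0 < (\<Sum>b'\<in>UNIV. P (a, b'))")
  case True
  then show ?thesis
    using P by (simp add: is_dist_def cond_kernel_def flip: sum_divide_distrib)
qed (simp add: is_dist_def cond_kernel_def)

lemma markov_chain_kernel:
  fixes P :: "'x::finite \<times> 'y::finite \<times> 'z::finite \<Rightarrow> real"
  assumes P: "\<And>w. 0 \<le> P w" and M: "markov_chain P"
  obtains K where "\<And>y. is_dist (K y)"
    and "\<And>x y z. P (x, y, z) = (\<Sum>z'\<in>UNIV. P (x, y, z')) * K y z"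
proof
  define PYZ where "PYZ = (\<lambda>(y, z). \<Sum>x\<in>UNIV. P (x, y, z))"
  show "is_dist (cond_kernel PYZ y)" for y
    by (rule is_dist_cond_kernel) (auto simp: PYZ_def intro: sum_nonneg P)
  fix x y z
  define PY where "PY = (\<Sum>x'\<in>UNIV. \<Sum>z'\<in>UNIV. P (x', y, z'))"
  have PY_swap: "(\<Sum>z'\<in>UNIV. \<Sum>x'\<in>UNIV. P (x', y, z')) = PY"
    unfolding PY_def by (rule sum.swap)
  show "P (x, y, z) = (\<Sum>z'\<in>UNIV. P (x, y, z')) * cond_kernel PYZ y z"
  proof (cases "0 < PY")
    case True
    have "P (x, y, z) * PY = (\<Sum>z'\<in>UNIV. P (x, y, z')) * (\<Sum>x'\<in>UNIV. P (x', y, z))"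
      using M unfolding markov_chain_def PY_def by blast
    with True PY_swap show ?thesis by (simp add: PYZ_def cond_kernel_def field_simps)
  next
    case False
    with P have "PY = 0"
      unfolding PY_def by (meson order.antisym not_less sum_nonneg)
    with P have "(\<Sum>z'\<in>UNIV. P (x, y, z')) = 0"
      unfolding PY_def by (simp add: sum_nonneg_eq_0_iff sum_nonneg)
    with P show ?thesis by (simp add: sum_nonneg_eq_0_iff)
  qed
qed

lemma joint_eq_product_cond_kernel:
  assumes P: "\<And>w. 0 \<le> P w"
  shows "P = (\<lambda>(a, b). (\<Sum>b'\<in>UNIV. P (a, b')) * cond_kernel P a b)"
proof
  fix w :: "'a \<times> 'b"
  obtain a b where w: "w = (a, b)" by (cases w)
  show "P w = (case w of (a, b) \<Rightarrow> (\<Sum>b'\<in>UNIV. P (a, b')) * cond_kernel P a b)"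
  proof (cases "0 < (\<Sum>b'\<in>UNIV. P (a, b'))")
    case False
    with P have "(\<Sum>b'\<in>UNIV. P (a, b')) = 0"
      by (meson order.antisym not_less sum_nonneg)
    with P show ?thesis
      unfolding w by (simp add: sum_nonneg_eq_0_iff)
  qed (simp add: w cond_kernel_def)
qed

lemma INF_convex_combination_le:
  fixes F1 F2 :: "'a \<Rightarrow> ereal"
  assumes "0 \<le> l" "l \<le> 1"
  shows "ereal l * (INF x\<in>A. F1 x) + ereal (1 - l) * (INF x\<in>A. F2 x)
    \<le> (INF x\<in>A. ereal l * F1 x + ereal (1 - l) * F2 x)"
  using assms by (intro INF_greatest add_mono ereal_mult_left_mono INF_lower) auto

definition IGf_objective ::
    "(real \<Rightarrow> real) \<Rightarrow> (real \<Rightarrow> real) \<Rightarrow> ('a::finite \<Rightarrow> real) \<Rightarrow> ('a \<Rightarrow> 'b::finite \<Rightarrow> real)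
      \<Rightarrow> ('b \<Rightarrow> real) \<Rightarrow> ereal" where
  "IGf_objective G f p W q = (\<Sum>a\<in>UNIV. ereal (p a) * Gext G f (fdiv f (W a) q))"

lemma IGf_product_eq_INF:
  assumes W: "\<And>a. is_dist (W a)"
  shows "IGf G f (\<lambda>(a, b). p a * W a b) = (INF q\<in>{q. is_dist q}. IGf_objective G f p W q)"
proof -
  have row: "(\<Sum>b\<in>UNIV. p a * W a b) = p a" for a
    using W by (simp add: is_dist_def flip: sum_distrib_left)
  have "ereal (p a) * Gext G f (fdiv f (\<lambda>b. p a * W a b / p a) q)
      = ereal (p a) * Gext G f (fdiv f (W a) q)" for a q
    by (cases "p a = 0") (simp_all add: zero_ereal_def[symmetric])
  then show ?thesis
    unfolding IGf_def IGf_objective_def by (simp add: row)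
qed

lemma IGf_objective_convex_combination:
  assumes l: "0 \<le> l" "l \<le> 1" and p1: "\<And>a. 0 \<le> p1 a" and p2: "\<And>a. 0 \<le> p2 a"
  shows "IGf_objective G f (\<lambda>a. l * p1 a + (1 - l) * p2 a) W q
    = ereal l * IGf_objective G f p1 W q + ereal (1 - l) * IGf_objective G f p2 W q"
proof -
  define g where "g a = Gext G f (fdiv f (W a) q)" for a
  have scale: "ereal c * (\<Sum>a\<in>UNIV. ereal (p a) * g a) = (\<Sum>a\<in>UNIV. ereal (c * p a) * g a)"
    if "0 \<le> c" for c and p :: "'a \<Rightarrow> real"
  proof -
    have "ereal c * (\<Sum>a\<in>UNIV. ereal (p a) * g a) = (\<Sum>a\<in>UNIV. ereal (p a) * g a * ereal c)"
      by (subst mult.commute) (rule sum_distrib_right_ereal[OF that])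
    also have "\<dots> = (\<Sum>a\<in>UNIV. ereal (c * p a) * g a)"
      by (rule sum.cong) (simp_all only: times_ereal.simps(1)[symmetric] mult_ac)
    finally show ?thesis .
  qed
  have "ereal (l * p1 a + (1 - l) * p2 a) * g a
      = ereal (l * p1 a) * g a + ereal ((1 - l) * p2 a) * g a" for a
    using ereal_left_distrib[of "ereal (l * p1 a)" "ereal ((1 - l) * p2 a)" "g a"] l p1 p2 by simp
  then show ?thesis
    unfolding IGf_objective_def g_def[symmetric] using l by (simp add: scale sum.distrib)
qed

lemma IGf_concave:
  assumes W: "\<And>a. is_dist (W a)"
    and l: "0 \<le> l" "l \<le> 1" and p1: "\<And>a. 0 \<le> p1 a" and p2: "\<And>a. 0 \<le> p2 a"
  shows "ereal l * IGf G f (\<lambda>(a, b). p1 a * W a b) + ereal (1 - l) * IGf G f (\<lambda>(a, b). p2 a * W a b)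
    \<le> IGf G f (\<lambda>(a, b). (l * p1 a + (1 - l) * p2 a) * W a b)"
  unfolding IGf_product_eq_INF[OF W] IGf_objective_convex_combination[OF l p1 p2]
  by (rule INF_convex_combination_le[OF l])

lemma IGf_objective_garbling_le:
  fixes W :: "'a::finite \<Rightarrow> 'b::finite \<Rightarrow> real" and K :: "'b \<Rightarrow> 'c::finite \<Rightarrow> real"
  assumes cf: "convex_on {0..} f" and f1: "f 1 = 0"
    and G_mono: "\<And>a b. 0 \<le> a \<Longrightarrow> a \<le> b \<Longrightarrow> ereal b < Dm f \<Longrightarrow> G a \<le> G b"
    and p: "\<And>a. 0 \<le> p a" and W: "\<And>a. is_dist (W a)" and K: "\<And>b. is_dist (K b)"
    and q: "is_dist q"
  shows "IGf_objective G f p (\<lambda>a c. \<Sum>b\<in>UNIV. W a b * K b c) (\<lambda>c. \<Sum>b\<in>UNIV. q b * K b c)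
    \<le> IGf_objective G f p W q"
  unfolding IGf_objective_def
proof (intro sum_mono ereal_mult_left_mono)
  fix a
  have W0: "0 \<le> W a b" and q0: "0 \<le> q b" for b
    using W q by (auto simp: is_dist_def)
  show "Gext G f (fdiv f (\<lambda>c. \<Sum>b\<in>UNIV. W a b * K b c) (\<lambda>c. \<Sum>b\<in>UNIV. q b * K b c))
      \<le> Gext G f (fdiv f (W a) q)"
    using G_mono fdiv_nonneg[OF cf f1 is_dist_compose[OF W K] is_dist_compose[OF q K]]
      fdiv_data_processing[OF cf W0 q0 K] by (rule Gext_mono)
qed (simp add: p)

lemma IGf_garbling_le:
  fixes P :: "'a::finite \<times> 'b::finite \<Rightarrow> real" and K :: "'b \<Rightarrow> 'c::finite \<Rightarrow> real"
  assumes cf: "convex_on {0..} f" and f1: "f 1 = 0"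
    and G_mono: "\<And>a b. 0 \<le> a \<Longrightarrow> a \<le> b \<Longrightarrow> ereal b < Dm f \<Longrightarrow> G a \<le> G b"
    and P: "\<And>w. 0 \<le> P w" and K: "\<And>b. is_dist (K b)"
  shows "IGf G f (\<lambda>(a, c). \<Sum>b\<in>UNIV. P (a, b) * K b c) \<le> IGf G f P"
proof -
  define p where "p a = (\<Sum>b\<in>UNIV. P (a, b))" for a
  define W where "W = cond_kernel P"
  have p0: "0 \<le> p a" for a
    unfolding p_def by (intro sum_nonneg P)
  have W: "is_dist (W a)" for a
    unfolding W_def by (rule is_dist_cond_kernel[of P, OF P])
  have P_eq: "P = (\<lambda>(a, b). p a * W a b)"
    unfolding p_def W_def by (rule joint_eq_product_cond_kernel[of P, OF P])
  have "(\<lambda>(a, c). \<Sum>b\<in>UNIV. P (a, b) * K b c) = (\<lambda>(a, c). p a * (\<Sum>b\<in>UNIV. W a b * K b c))"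
    unfolding P_eq by (simp add: sum_distrib_left mult.assoc)
  then have "IGf G f (\<lambda>(a, c). \<Sum>b\<in>UNIV. P (a, b) * K b c)
      = (INF q\<in>{q. is_dist q}. IGf_objective G f p (\<lambda>a c. \<Sum>b\<in>UNIV. W a b * K b c) q)"
    using IGf_product_eq_INF[OF is_dist_compose[OF W K]] by simp
  also have "\<dots> \<le> (INF q\<in>{q. is_dist q}. IGf_objective G f p W q)"
  proof (rule INF_greatest)
    fix q :: "'b \<Rightarrow> real" assume "q \<in> {q. is_dist q}"
    then have q: "is_dist q" by simp
    have "IGf_objective G f p (\<lambda>a c. \<Sum>b\<in>UNIV. W a b * K b c) (\<lambda>c. \<Sum>b\<in>UNIV. q b * K b c)
        \<le> IGf_objective G f p W q"
      using cf f1 G_mono p0 W K q by (rule IGf_objective_garbling_le)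
    moreover have "is_dist (\<lambda>c. \<Sum>b\<in>UNIV. q b * K b c)"
      by (rule is_dist_compose[OF q K])
    ultimately show "(INF q\<in>{q. is_dist q}. IGf_objective G f p (\<lambda>a c. \<Sum>b\<in>UNIV. W a b * K b c) q)
        \<le> IGf_objective G f p W q"
      by (simp add: INF_lower2)
  qed
  also have "\<dots> = IGf G f P"
    unfolding P_eq by (rule IGf_product_eq_INF[OF W, symmetric])
  finally show ?thesis .
qed

lemma sum_UNIV_pair:
  fixes h :: "'a::finite \<times> 'b::finite \<Rightarrow> 'c::comm_monoid_add"
  shows "(\<Sum>w\<in>UNIV. h w) = (\<Sum>a\<in>UNIV. \<Sum>b\<in>UNIV. h (a, b))"
  by (simp add: sum.cartesian_product UNIV_Times_UNIV[symmetric] del: UNIV_Times_UNIV)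

lemma IGf_input_through_snd:
  fixes R :: "'a::finite \<Rightarrow> 'b::finite \<Rightarrow> real" and K :: "'b \<Rightarrow> 'c::finite \<Rightarrow> real"
  assumes R: "\<And>a b. 0 \<le> R a b" and K: "\<And>b. is_dist (K b)"
  shows "IGf G f (\<lambda>((a, b), c). R a b * K b c) = IGf G f (\<lambda>(b, c). (\<Sum>a\<in>UNIV. R a b) * K b c)"
proof -
  have obj: "IGf_objective G f (case_prod R) (K \<circ> snd) q
      = IGf_objective G f (\<lambda>b. \<Sum>a\<in>UNIV. R a b) K q" for q
  proof -
    have "IGf_objective G f (case_prod R) (K \<circ> snd) q
        = (\<Sum>b\<in>UNIV. \<Sum>a\<in>UNIV. ereal (R a b) * Gext G f (fdiv f (K b) q))"
      unfolding IGf_objective_def by (simp add: sum_UNIV_pair sum.swap[of _ "UNIV :: 'a set"])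
    then show ?thesis
      unfolding IGf_objective_def by (simp add: sum_ereal_mult_const R)
  qed
  have "IGf G f (\<lambda>((a, b), c). R a b * K b c) = IGf G f (\<lambda>(w, c). case_prod R w * (K \<circ> snd) w c)"
    by (rule arg_cong[where f = "IGf G f"]) auto
  also have "\<dots> = (INF q\<in>{q. is_dist q}. IGf_objective G f (case_prod R) (K \<circ> snd) q)"
    by (rule IGf_product_eq_INF) (simp add: K)
  also have "\<dots> = (INF q\<in>{q. is_dist q}. IGf_objective G f (\<lambda>b. \<Sum>a\<in>UNIV. R a b) K q)"
    by (simp only: obj)
  also have "\<dots> = IGf G f (\<lambda>(b, c). (\<Sum>a\<in>UNIV. R a b) * K b c)"
    by (rule IGf_product_eq_INF[OF K, symmetric])
  finally show ?thesis .
qed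

lemma IGf_markov_data_processing:
  fixes P :: "'x::finite \<times> 'y::finite \<times> 'z::finite \<Rightarrow> real"
  assumes cf: "convex_on {0..} f" and f1: "f 1 = 0"
    and G_mono: "\<And>a b. 0 \<le> a \<Longrightarrow> a \<le> b \<Longrightarrow> ereal b < Dm f \<Longrightarrow> G a \<le> G b"
    and P: "\<And>w. 0 \<le> P w" and M: "markov_chain P"
  shows "IGf G f (\<lambda>(x, z). \<Sum>y\<in>UNIV. P (x, y, z)) \<le> IGf G f (\<lambda>(x, y). \<Sum>z\<in>UNIV. P (x, y, z))"
proof -
  obtain K where K: "\<And>y. is_dist (K y)"
    and PK: "\<And>x y z. P (x, y, z) = (\<Sum>z'\<in>UNIV. P (x, y, z')) * K y z"
    using markov_chain_kernel[of P, OF P M] by blast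
  let ?PXY = "\<lambda>(x, y). \<Sum>z\<in>UNIV. P (x, y, z)"
  have "\<And>w. 0 \<le> ?PXY w"
    by (auto intro: sum_nonneg P)
  with cf f1 G_mono have "IGf G f (\<lambda>(x, z). \<Sum>y\<in>UNIV. ?PXY (x, y) * K y z) \<le> IGf G f ?PXY"
    using K by (rule IGf_garbling_le)
  then show ?thesis
    by (simp flip: PK)
qed

lemma IGf_markov_joint_output:
  fixes P :: "'x::finite \<times> 'y::finite \<times> 'z::finite \<Rightarrow> real"
  assumes cf: "convex_on {0..} f" and f1: "f 1 = 0"
    and G_mono: "\<And>a b. 0 \<le> a \<Longrightarrow> a \<le> b \<Longrightarrow> ereal b < Dm f \<Longrightarrow> G a \<le> G b"
    and P: "\<And>w. 0 \<le> P w" and M: "markov_chain P"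
  shows "IGf G f P = IGf G f (\<lambda>(x, y). \<Sum>z\<in>UNIV. P (x, y, z))"
proof (rule antisym)
  obtain K where K: "\<And>y. is_dist (K y)"
    and PK: "\<And>x y z. P (x, y, z) = (\<Sum>z'\<in>UNIV. P (x, y, z')) * K y z"
    using markov_chain_kernel[of P, OF P M] by blast
  let ?PXY = "\<lambda>(x, y). \<Sum>z\<in>UNIV. P (x, y, z)"
  have PXY: "\<And>w. 0 \<le> ?PXY w"
    by (auto intro: sum_nonneg P)
  define K' where "K' y w = (if fst w = y then K y (snd w) else 0)" for y and w :: "'y \<times> 'z"
  have "(\<Sum>w\<in>UNIV. K' y w) = (\<Sum>z\<in>UNIV. K y z)" for y
    unfolding K'_def sum_UNIV_pair by (subst sum.swap) simp
  with K have "is_dist (K' y)" for y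
    by (auto simp: is_dist_def K'_def)
  with cf f1 G_mono PXY have "IGf G f (\<lambda>(x, w). \<Sum>y\<in>UNIV. ?PXY (x, y) * K' y w) \<le> IGf G f ?PXY"
    by (rule IGf_garbling_le)
  moreover have "(\<lambda>(x, w). \<Sum>y\<in>UNIV. ?PXY (x, y) * K' y w) = P"
    by (auto simp: K'_def if_distrib cong: if_cong simp flip: PK)
  ultimately show "IGf G f P \<le> IGf G f ?PXY"
    by simp
  define proj where "proj w y = (if fst w = y then 1 else 0 :: real)" for w :: "'y \<times> 'z" and y
  have "is_dist (proj w)" for w
    by (simp add: is_dist_def proj_def)
  with cf f1 G_mono P have "IGf G f (\<lambda>(x, y). \<Sum>w\<in>UNIV. P (x, w) * proj w y) \<le> IGf G f P"
    by (rule IGf_garbling_le)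
  moreover have "(\<Sum>w\<in>UNIV. P (x, w) * proj w y) = (\<Sum>z\<in>UNIV. P (x, y, z))" for x y
    unfolding proj_def sum_UNIV_pair by (subst sum.swap) (simp add: if_distrib cong: if_cong)
  ultimately show "IGf G f ?PXY \<le> IGf G f P"
    by simp
qed

lemma IGf_markov_joint_input:
  fixes P :: "'x::finite \<times> 'y::finite \<times> 'z::finite \<Rightarrow> real"
  assumes P: "\<And>w. 0 \<le> P w" and M: "markov_chain P"
  shows "IGf G f (\<lambda>((x, y), z). P (x, y, z)) = IGf G f (\<lambda>(y, z). \<Sum>x\<in>UNIV. P (x, y, z))"
proof -
  obtain K where K: "\<And>y. is_dist (K y)"
    and PK: "\<And>x y z. P (x, y, z) = (\<Sum>z'\<in>UNIV. P (x, y, z')) * K y z"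
    using markov_chain_kernel[of P, OF P M] by blast
  define R where "R x y = (\<Sum>z\<in>UNIV. P (x, y, z))" for x y
  have R: "0 \<le> R x y" for x y
    unfolding R_def by (intro sum_nonneg P)
  have "(\<lambda>((x, y), z). P (x, y, z)) = (\<lambda>((x, y), z). R x y * K y z)"
    unfolding R_def by (simp flip: PK)
  moreover have "(\<Sum>x\<in>UNIV. P (x, y, z)) = (\<Sum>x\<in>UNIV. R x y) * K y z" for y z
  proof -
    have "(\<Sum>x\<in>UNIV. P (x, y, z)) = (\<Sum>x\<in>UNIV. R x y * K y z)"
      by (rule sum.cong[OF refl]) (simp add: R_def flip: PK)
    then show ?thesis
      by (simp add: sum_distrib_right)
  qed
  ultimately show ?thesis
    using IGf_input_through_snd[OF R K] by simp
qed

theorem lemma2: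
  fixes f :: "real \<Rightarrow> real" and G :: "real \<Rightarrow> real"
  assumes f_convex: "convex_on {0..} f"
    and f1: "f 1 = 0"
    and G_mono: "\<And>a b. 0 \<le> a \<Longrightarrow> a \<le> b \<Longrightarrow> ereal b < Dm f \<Longrightarrow> G a \<le> G b"
    and G_nonneg: "\<And>a. 0 \<le> a \<Longrightarrow> ereal a < Dm f \<Longrightarrow> 0 \<le> G a"
    and G0: "G 0 = 0"
  shows
    "(\<forall>(W :: 'x::finite \<Rightarrow> 'y::finite \<Rightarrow> real) p1 p2 (l :: real).
        (\<forall>x. is_dist (W x)) \<longrightarrow> is_dist p1 \<longrightarrow> is_dist p2 \<longrightarrow> 0 \<le> l \<longrightarrow> l \<le> 1 \<longrightarrow>
        ereal l * IGf G f (\<lambda>(x, y). p1 x * W x y)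
          + ereal (1 - l) * IGf G f (\<lambda>(x, y). p2 x * W x y)
        \<le> IGf G f (\<lambda>(x, y). (l * p1 x + (1 - l) * p2 x) * W x y))
     \<and> (\<forall>P :: 'x \<times> 'y \<times> 'z::finite \<Rightarrow> real. is_dist P \<longrightarrow> markov_chain P \<longrightarrow>
          IGf G f (\<lambda>(x, z). \<Sum>y\<in>UNIV. P (x, y, z))
            \<le> IGf G f (\<lambda>(x, y). \<Sum>z\<in>UNIV. P (x, y, z)))
     \<and> (\<forall>P :: 'x \<times> 'y \<times> 'z \<Rightarrow> real. is_dist P \<longrightarrow> markov_chain P \<longrightarrow>
          IGf G f P = IGf G f (\<lambda>(x, y). \<Sum>z\<in>UNIV. P (x, y, z))
          \<and> IGf G f (\<lambda>((x, y), z). P (x, y, z)) = IGf G f (\<lambda>(y, z). \<Sum>x\<in>UNIV. P (x, y, z)))"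
proof (intro conjI allI impI)
  fix W :: "'x \<Rightarrow> 'y \<Rightarrow> real" and p1 p2 :: "'x \<Rightarrow> real" and l :: real
  assume "\<forall>x. is_dist (W x)" "is_dist p1" "is_dist p2" "0 \<le> l" "l \<le> 1"
  then show "ereal l * IGf G f (\<lambda>(x, y). p1 x * W x y)
          + ereal (1 - l) * IGf G f (\<lambda>(x, y). p2 x * W x y)
        \<le> IGf G f (\<lambda>(x, y). (l * p1 x + (1 - l) * p2 x) * W x y)"
    by (intro IGf_concave) (auto simp: is_dist_def)
next
  fix P :: "'x \<times> 'y \<times> 'z \<Rightarrow> real"
  assume "is_dist P" and M: "markov_chain P"
  then have P: "\<And>w. 0 \<le> P w"
    unfolding is_dist_def by blast
  show "IGf G f (\<lambda>(x, z). \<Sum>y\<in>UNIV. P (x, y, z)) \<le> IGf G f (\<lambda>(x, y). \<Sum>z\<in>UNIV. P (x, y, z))"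
    using f_convex f1 G_mono P M by (rule IGf_markov_data_processing)
  show "IGf G f P = IGf G f (\<lambda>(x, y). \<Sum>z\<in>UNIV. P (x, y, z))"
    using f_convex f1 G_mono P M by (rule IGf_markov_joint_output)
  show "IGf G f (\<lambda>((x, y), z). P (x, y, z)) = IGf G f (\<lambda>(y, z). \<Sum>x\<in>UNIV. P (x, y, z))"
    using P M by (rule IGf_markov_joint_input)
qed

end
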